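(* Let $\mathcal{X}\subset\mathbb{R}^N$ be convex and compact, and let $f_{t+1}:\mathbb{R}^N\to\mathbb{R}$ be differentiable and convex with $L$-Lipschitz gradient on $\mathcal{X}$, i.e. $\|\nabla f_{t+1}(\mathbf{x})-\nabla f_{t+1}(\mathbf{y})\|\le L\|\mathbf{x}-\mathbf{y}\|$ for all $\mathbf{x},\mathbf{y}\in\mathcal{X}$, where $0<L<\infty$. Let $\bar{\mathbf{x}}_{t+1}\in\mathcal{X}$, and let $\mathbf{g}_t\in\mathbb{R}^N$ and $\epsilon>0$ satisfy $\|\mathbf{g}_t-\nabla f_{t+1}(\bar{\mathbf{x}}_{t+1})\|\le\epsilon$, with $\|\mathbf{g}_t\|>\epsilon$. Let $\delta>0$ and $0<\beta\le 1/L$, and define the predictive update $\mathbf{x}_{t+1}=\mathrm{proj}_{\mathcal{X}}(\bar{\mathbf{x}}_{t+1}-\beta\mathbf{g}_t)$ and $\mathbf{d}_{t+1}=\mathbf{x}_{t+1}-\bar{\mathbf{x}}_{t+1}$. If $$\|\mathbf{d}_{t+1}\|\ge\frac{\epsilon}{L}+\sqrt{\frac{\epsilon^2}{L^2}+\frac{2\delta}{L}},$$ then $f_{t+1}(\mathbf{x}_{t+1})\le f_{t+1}(\bar{\mathbf{x}}_{t+1})-\delta$, i.e. the predictive update strictly improves on the OCO update $\bar{\mathbf{x}}_{t+1}$ by at least $\delta$.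
   Context: $\|\cdot\|$ is the Euclidean norm and $\mathrm{proj}_{\mathcal{X}}(\mathbf{x})\in\arg\min_{\mathbf{y}\in\mathcal{X}}\|\mathbf{x}-\mathbf{y}\|$. In the paper's online setting, $\bar{\mathbf{x}}_{t+1}$ is the decision computed by an online convex optimization (OCO) update at round $t$, and $\mathbf{g}_t$ is an estimate ($\epsilon$-forecaster) of the gradient of the next-round loss $f_{t+1}$ at $\bar{\mathbf{x}}_{t+1}$ with error at most $\epsilon$. *)

theory Defs
  imports "HOL-Analysis.Analysis"
begin

end

theory Submission
  imports Defs
begin

text \<open>The descent lemma for an \<open>L\<close>-smooth function gives
  \<open>f x \<le> f xbar + \<nabla>f(xbar)\<cdot>d + L\<parallel>d\<parallel>\<^sup>2/2\<close> with \<open>d = x - xbar\<close>. The variational inequality of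
  the projection gives \<open>\<parallel>d\<parallel>\<^sup>2 \<le> -\<beta> g\<cdot>d\<close>, hence \<open>g\<cdot>d \<le> -L\<parallel>d\<parallel>\<^sup>2\<close> as \<open>\<beta> \<le> 1/L\<close>, and the
  forecast error costs at most \<open>\<epsilon>\<parallel>d\<parallel>\<close>. Altogether \<open>f x \<le> f xbar - (L\<parallel>d\<parallel>\<^sup>2/2 - \<epsilon>\<parallel>d\<parallel>)\<close>,
  and the threshold on \<open>\<parallel>d\<parallel>\<close> is the larger root of \<open>L r\<^sup>2/2 - \<epsilon> r = \<delta>\<close>.\<close>

lemma has_real_derivative_along_line:
  fixes f :: "'a::real_inner \<Rightarrow> real"
  assumes "(f has_derivative (\<lambda>h. grad \<bullet> h)) (at (a + t *\<^sub>R d))"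
  shows "((\<lambda>t. f (a + t *\<^sub>R d)) has_real_derivative (grad \<bullet> d)) (at t)"
proof -
  have "((\<lambda>t. a + t *\<^sub>R d) has_derivative (\<lambda>h. h *\<^sub>R d)) (at t)"
    by (auto intro!: derivative_eq_intros)
  from has_derivative_compose[OF this assms]
  have "((\<lambda>t. f (a + t *\<^sub>R d)) has_derivative (\<lambda>h. grad \<bullet> (h *\<^sub>R d))) (at t)"
    by (simp add: o_def)
  then show ?thesis
    unfolding has_field_derivative_def
    by (rule has_derivative_eq_rhs) (auto simp: fun_eq_iff mult.commute)
qed

lemma descent_lemma:
  fixes f :: "'a::real_inner \<Rightarrow> real" and grad :: "'a \<Rightarrow> 'a"
  assumes "convex S" and "a \<in> S" and "b \<in> S"
    and deriv: "\<And>y. y \<in> S \<Longrightarrow> (f has_derivative (\<lambda>h. grad y \<bullet> h)) (at y)"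
    and lipschitz: "\<And>y z. y \<in> S \<Longrightarrow> z \<in> S \<Longrightarrow> norm (grad y - grad z) \<le> L * norm (y - z)"
  shows "f b \<le> f a + grad a \<bullet> (b - a) + L * (norm (b - a))\<^sup>2 / 2"
proof -
  define d where "d = b - a"
  define \<psi> where "\<psi> t = f (a + t *\<^sub>R d) - t * (grad a \<bullet> d) - L * t\<^sup>2 * (norm d)\<^sup>2 / 2" for t
  have "\<psi> 1 \<le> \<psi> 0"
  proof (rule DERIV_nonpos_imp_nonincreasing[of 0 1 \<psi>])
    fix t :: real assume t: "0 \<le> t" "t \<le> 1"
    have mem: "a + t *\<^sub>R d \<in> S"
    proof -
      have "a + t *\<^sub>R d = (1 - t) *\<^sub>R a + t *\<^sub>R b"
        by (simp add: d_def algebra_simps)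
      then show ?thesis using convexD_alt[OF assms(1-3)] t by simp
    qed
    have D: "(\<psi> has_real_derivative
        (grad (a + t *\<^sub>R d) \<bullet> d - grad a \<bullet> d - L * t * (norm d)\<^sup>2)) (at t)"
      unfolding \<psi>_def
      by (rule has_real_derivative_along_line[OF deriv[OF mem]] derivative_eq_intros refl | simp)+
    have "grad (a + t *\<^sub>R d) \<bullet> d - grad a \<bullet> d = (grad (a + t *\<^sub>R d) - grad a) \<bullet> d"
      by (simp add: inner_diff_left)
    also have "\<dots> \<le> norm (grad (a + t *\<^sub>R d) - grad a) * norm d"
      by (rule norm_cauchy_schwarz)
    also have "\<dots> \<le> L * norm (t *\<^sub>R d) * norm d"
      using lipschitz[OF mem assms(2)] by (intro mult_right_mono) auto
    also have "\<dots> = L * t * (norm d)\<^sup>2"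
      using t by (simp add: power2_eq_square)
    finally show "\<exists>y. (\<psi> has_real_derivative y) (at t) \<and> y \<le> 0"
      using D by (intro exI[of _ "grad (a + t *\<^sub>R d) \<bullet> d - grad a \<bullet> d - L * t * (norm d)\<^sup>2"]) auto
  qed simp
  then show ?thesis
    by (simp add: \<psi>_def d_def)
qed

lemma projected_step_norm_le:
  fixes X :: "'a::euclidean_space set"
  assumes "convex X" and "closed X" and "a \<in> X" and "p \<in> X"
    and closest: "\<And>y. y \<in> X \<Longrightarrow> norm ((a - \<beta> *\<^sub>R g) - p) \<le> norm ((a - \<beta> *\<^sub>R g) - y)"
  shows "(norm (p - a))\<^sup>2 \<le> - \<beta> * (g \<bullet> (p - a))"
proof -
  have "((a - \<beta> *\<^sub>R g) - p) \<bullet> (a - p) \<le> 0"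
    using any_closest_point_dot[of X p a "a - \<beta> *\<^sub>R g"] assms closest
    by (simp add: dist_norm)
  then show ?thesis
    by (simp add: power2_norm_eq_inner inner_diff_left inner_diff_right inner_commute algebra_simps)
qed

lemma quadratic_threshold:
  fixes L \<epsilon> \<delta> r :: real
  assumes "0 < L" and "0 \<le> \<delta>"
    and "r \<ge> \<epsilon> / L + sqrt (\<epsilon>\<^sup>2 / L\<^sup>2 + 2 * \<delta> / L)"
  shows "\<delta> \<le> L * r\<^sup>2 / 2 - \<epsilon> * r"
proof -
  define s where "s = sqrt (\<epsilon>\<^sup>2 / L\<^sup>2 + 2 * \<delta> / L)"
  have "s\<^sup>2 = \<epsilon>\<^sup>2 / L\<^sup>2 + 2 * \<delta> / L"
    unfolding s_def using assms(1,2) by (intro real_sqrt_pow2) simp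
  moreover have "0 \<le> s"
    unfolding s_def using assms(1,2) by simp
  then have "s\<^sup>2 \<le> (r - \<epsilon> / L)\<^sup>2"
    using assms(3) by (intro power_mono) (simp_all add: s_def)
  ultimately have "\<epsilon>\<^sup>2 / L\<^sup>2 + 2 * \<delta> / L \<le> (r - \<epsilon> / L)\<^sup>2"
    by simp
  then have "L * (\<epsilon>\<^sup>2 / L\<^sup>2 + 2 * \<delta> / L) \<le> L * (r - \<epsilon> / L)\<^sup>2"
    using assms(1) by simp
  moreover have "L * (\<epsilon>\<^sup>2 / L\<^sup>2 + 2 * \<delta> / L) = \<epsilon>\<^sup>2 / L + 2 * \<delta>"
    and "L * (r - \<epsilon> / L)\<^sup>2 = L * r\<^sup>2 - 2 * \<epsilon> * r + \<epsilon>\<^sup>2 / L"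
    using assms(1) by (simp_all add: power2_eq_square field_simps)
  ultimately show ?thesis
    by simp
qed

theorem lemma3:
  fixes X :: "(real ^ 'n) set"
    and f :: "real ^ 'n \<Rightarrow> real"
    and grad :: "real ^ 'n \<Rightarrow> real ^ 'n"
    and xbar g x :: "real ^ 'n"
    and L \<epsilon> \<delta> \<beta> :: real
  assumes "convex X" and "compact X"
    and "\<And>y. (f has_derivative (\<lambda>h. grad y \<bullet> h)) (at y)"
    and "convex_on UNIV f"
    and "\<And>y z. y \<in> X \<Longrightarrow> z \<in> X \<Longrightarrow> norm (grad y - grad z) \<le> L * norm (y - z)"
    and "0 < L"
    and "xbar \<in> X"
    and "\<epsilon> > 0"
    and "norm (g - grad xbar) \<le> \<epsilon>"
    and "norm g > \<epsilon>"
    and "\<delta> > 0"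
    and "0 < \<beta>" and "\<beta> \<le> 1 / L"
    and "x \<in> X"
    and "\<And>y. y \<in> X \<Longrightarrow> norm ((xbar - \<beta> *\<^sub>R g) - x) \<le> norm ((xbar - \<beta> *\<^sub>R g) - y)"
    and "norm (x - xbar) \<ge> \<epsilon> / L + sqrt (\<epsilon>\<^sup>2 / L\<^sup>2 + 2 * \<delta> / L)"
  shows "f x \<le> f xbar - \<delta>"
proof -
  define d where "d = x - xbar"
  have descent: "f x \<le> f xbar + grad xbar \<bullet> d + L * (norm d)\<^sup>2 / 2"
    using descent_lemma[OF assms(1,7,14) assms(3,5)] by (simp add: d_def)
  have "(norm d)\<^sup>2 \<le> - \<beta> * (g \<bullet> d)"
    using projected_step_norm_le[OF assms(1) compact_imp_closed[OF assms(2)] assms(7,14,15)]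
    by (simp add: d_def)
  moreover have "\<beta> * L \<le> 1"
    using assms(6,13) by (simp add: field_simps)
  then have "\<beta> * (L * (norm d)\<^sup>2) \<le> (norm d)\<^sup>2"
    using mult_right_mono[of "\<beta> * L" 1 "(norm d)\<^sup>2"] by (simp add: mult.assoc)
  ultimately have "\<beta> * (g \<bullet> d) \<le> \<beta> * (- L * (norm d)\<^sup>2)"
    by simp
  then have step: "g \<bullet> d \<le> - L * (norm d)\<^sup>2"
    using mult_le_cancel_left_pos[OF assms(12)] by blast
  have "(grad xbar - g) \<bullet> d \<le> \<epsilon> * norm d"
    using norm_cauchy_schwarz[of "grad xbar - g" d] assms(9)
      mult_right_mono[of "norm (grad xbar - g)" \<epsilon> "norm d"]
    by (simp add: norm_minus_commute)
  then have forecast: "grad xbar \<bullet> d \<le> g \<bullet> d + \<epsilon> * norm d"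
    by (simp add: inner_diff_left)
  have "\<delta> \<le> L * (norm d)\<^sup>2 / 2 - \<epsilon> * norm d"
    using quadratic_threshold[OF assms(6)] assms(11,16) by (simp add: d_def)
  with descent step forecast show ?thesis
    by simp
qed

end
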